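(* For every object $V$ of $\mathcal{E}_q^{deg}$ there is an isomorphism in $\mathcal{F}_{iso}$ $$Q_V\cong\bigoplus_{A\in\mathcal{S}_V}iso_A,$$ where $\mathcal{S}_V$ is the set of subobjects $\alpha:A\hookrightarrow V$ of $V$ in $\mathcal{E}_q^{deg}$ (equivalently, the linear subspaces $A$ of $V$ with the restricted form, $V$ itself included).
   Context: $\mathcal{E}$: all $\mathbb{F}_2$-vector spaces; $(-)^*$ linear duality. $\mathcal{E}_q^{deg}$: objects finite-dimensional quadratic spaces over $\mathbb{F}_2$ (possibly degenerate), morphisms injective linear maps preserving quadratic forms. $\mathrm{Sp}(\mathcal{E}_q^{deg})$: same objects, morphisms spans $[V\leftarrow D\rightarrow W]$ up to iso of $D$, composed by pullback. $\mathcal{F}_{iso}=\mathrm{Func}(\mathrm{Sp}(\mathcal{E}_q^{deg}),\mathcal{E})$. $Q_V=\mathbb{F}_2[\mathrm{Hom}_{\mathrm{Sp}(\mathcal{E}_q^{deg})}(V,-)]$. Duality: $DF=(-)^*\circ F\circ tr^{op}$ with $tr[V\leftarrow X\rightarrow W]=[W\leftarrow X\rightarrow V]$. $a_V:Q_V\to DQ_V$ is the morphism corresponding by Yoneda to the linear form $(\mathrm{Id}_V)^*\in\mathbb{F}_2[\mathrm{End}(V)]^*$ taking value $1$ on $\mathrm{Id}_V$ and $0$ on all other basis elements; the isotropic functor $iso_V$ is the image of $a_V$. *)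

theory Defs
  imports Main "HOL-Library.Z2" "HOL-Library.Function_Algebras"
begin

text \<open>Every finite-dimensional F_2-vector space is
  realised as a finite subspace of the ambient F_2-vector space nat => bit
  (pointwise addition); over F_2 a subspace is a subset containing 0 and closed
  under addition, and finite-dimensional means finite.\<close>

type_synonym vec = "nat \<Rightarrow> bit"

text \<open>An object: carrier subspace together with a quadratic form on it
  (extended by 0 outside the carrier, so that objects are determined by their data).\<close>
type_synonym qobj = "vec set \<times> (vec \<Rightarrow> bit)"

definition car :: "qobj \<Rightarrow> vec set" where "car V = fst V"
definition qf :: "qobj \<Rightarrow> vec \<Rightarrow> bit" where "qf V = snd V"

definition subspace2 :: "vec set \<Rightarrow> bool" where
  "subspace2 A \<longleftrightarrow> 0 \<in> A \<and> (\<forall>x\<in>A. \<forall>y\<in>A. x + y \<in> A)"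

text \<open>Polar form of q; q is a quadratic form iff q 0 = 0 and its polar form is bilinear
  (over F_2 this is the usual definition q(lambda x) = lambda^2 q(x), polar form bilinear).
  Degenerate forms are allowed.\<close>
definition polar :: "(vec \<Rightarrow> bit) \<Rightarrow> vec \<Rightarrow> vec \<Rightarrow> bit" where
  "polar q x y = q (x + y) + q x + q y"

definition quadratic_form :: "vec set \<Rightarrow> (vec \<Rightarrow> bit) \<Rightarrow> bool" where
  "quadratic_form A q \<longleftrightarrow> q 0 = 0 \<and>
     (\<forall>x\<in>A. \<forall>y\<in>A. \<forall>z\<in>A. polar q (x + y) z = polar q x z + polar q y z
                       \<and> polar q z (x + y) = polar q z x + polar q z y)"

definition is_obj :: "qobj \<Rightarrow> bool" where
  "is_obj V \<longleftrightarrow> finite (car V) \<and> subspace2 (car V) \<and> quadratic_form (car V) (qf V)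
     \<and> (\<forall>x. x \<notin> car V \<longrightarrow> qf V x = 0)"

definition is_qmor :: "qobj \<Rightarrow> qobj \<Rightarrow> (vec \<Rightarrow> vec) \<Rightarrow> bool" where
  "is_qmor V W f \<longleftrightarrow> f ` car V \<subseteq> car W \<and> inj_on f (car V)
     \<and> (\<forall>x\<in>car V. \<forall>y\<in>car V. f (x + y) = f x + f y)
     \<and> (\<forall>x\<in>car V. qf W (f x) = qf V x)"

type_synonym span = "qobj \<times> (vec \<Rightarrow> vec) \<times> (vec \<Rightarrow> vec)"

definition is_span :: "qobj \<Rightarrow> qobj \<Rightarrow> span \<Rightarrow> bool" where
  "is_span V W s \<longleftrightarrow> (case s of (D, f, g) \<Rightarrow> is_obj D \<and> is_qmor D V f \<and> is_qmor D W g)"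

text \<open>The isomorphism class of a span is represented by its canonical
  representative: the image of D in V x W (the legs are jointly injective, so two
  spans are isomorphic over V and W iff these images coincide).\<close>
type_synonym smor = "(vec \<times> vec) set"

definition span_class :: "span \<Rightarrow> smor" where
  "span_class s = (case s of (D, f, g) \<Rightarrow> (\<lambda>d. (f d, g d)) ` car D)"

definition hom :: "qobj \<Rightarrow> qobj \<Rightarrow> smor set" where
  "hom V W = span_class ` {s. is_span V W s}"

text \<open>Composition by pullback: for S : V -> W and T : W -> U the class of the
  composite T o S is the relational composite S O T (pullback along the
  injective legs into W).  Identity of V is Id_on (car V); the transposition tr
  of a span is converse.\<close>

text \<open>A functor is given by its values on objects (F_2-subspaces of an ambient
  type of characteristic 2; over F_2, linear = additive) and on morphisms
  (F_mor V W S : F(V) -> F(W) for S in hom V W).\<close>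
type_synonym 'x functor_data = "(qobj \<Rightarrow> 'x set) \<times> (qobj \<Rightarrow> qobj \<Rightarrow> smor \<Rightarrow> 'x \<Rightarrow> 'x)"

definition Fob :: "'x functor_data \<Rightarrow> qobj \<Rightarrow> 'x set" where "Fob F = fst F"
definition Fmor :: "'x functor_data \<Rightarrow> qobj \<Rightarrow> qobj \<Rightarrow> smor \<Rightarrow> 'x \<Rightarrow> 'x" where "Fmor F = snd F"

text \<open>Q_V = F_2[Hom(V,-)]: finitely supported F_2-valued functions on Hom(V,W)
  (Hom(V,W) is finite); a morphism T acts on basis elements by post-composition.\<close>
definition Qob :: "qobj \<Rightarrow> qobj \<Rightarrow> (smor \<Rightarrow> bit) set" where
  "Qob V W = {x. \<forall>S. S \<notin> hom V W \<longrightarrow> x S = 0}"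

definition Qmor :: "qobj \<Rightarrow> qobj \<Rightarrow> qobj \<Rightarrow> smor \<Rightarrow> (smor \<Rightarrow> bit) \<Rightarrow> (smor \<Rightarrow> bit)" where
  "Qmor V W W' T x = (\<lambda>S'. if S' \<in> hom V W' then (\<Sum>S\<in>{S\<in>hom V W. S O T = S'}. x S) else 0)"

definition Qfun :: "qobj \<Rightarrow> (smor \<Rightarrow> bit) functor_data" where
  "Qfun V = (Qob V, Qmor V)"

text \<open>Duality DF = (-)^* o F o tr^op: DF(W) = linear forms on F(W) (extended by 0),
  and DF(S) phi = phi o F(tr S).\<close>
definition dual_fun :: "('x::plus) functor_data \<Rightarrow> ('x \<Rightarrow> bit) functor_data" where
  "dual_fun F =
    ((\<lambda>W. {\<phi>. (\<forall>x\<in>Fob F W. \<forall>y\<in>Fob F W. \<phi> (x + y) = \<phi> x + \<phi> y)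
              \<and> (\<forall>x. x \<notin> Fob F W \<longrightarrow> \<phi> x = 0)}),
     (\<lambda>W W' S \<phi>. (\<lambda>y. if y \<in> Fob F W' then \<phi> (Fmor F W' W (converse S) y) else 0)))"

text \<open>Yoneda: the natural map Q_V -> G corresponding to xi in G(V), sending the
  basis element S in Hom(V,W) to G(S)(xi), extended linearly.\<close>
definition yoneda :: "('x::comm_monoid_add) functor_data \<Rightarrow> qobj \<Rightarrow> 'x \<Rightarrow> qobj \<Rightarrow> (smor \<Rightarrow> bit) \<Rightarrow> 'x" where
  "yoneda G V \<xi> W x = (\<Sum>S\<in>hom V W. if x S = 1 then Fmor G V W S \<xi> else 0)"

definition delta_id :: "qobj \<Rightarrow> (smor \<Rightarrow> bit) \<Rightarrow> bit" where
  "delta_id V = (\<lambda>x. if x \<in> Qob V V then x (Id_on (car V)) else 0)"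

definition a_map :: "qobj \<Rightarrow> qobj \<Rightarrow> (smor \<Rightarrow> bit) \<Rightarrow> ((smor \<Rightarrow> bit) \<Rightarrow> bit)" where
  "a_map V = yoneda (dual_fun (Qfun V)) V (delta_id V)"

definition iso_fun :: "qobj \<Rightarrow> ((smor \<Rightarrow> bit) \<Rightarrow> bit) functor_data" where
  "iso_fun V = ((\<lambda>W. a_map V W ` Qob V W), Fmor (dual_fun (Qfun V)))"

definition subobjects :: "qobj \<Rightarrow> qobj set" where
  "subobjects V = {(A, \<lambda>x. if x \<in> A then qf V x else 0) | A. A \<subseteq> car V \<and> subspace2 A}"

definition dsum :: "'i set \<Rightarrow> ('i \<Rightarrow> ('x::zero) functor_data) \<Rightarrow> ('i \<Rightarrow> 'x) functor_data" where
  "dsum I F =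
    ((\<lambda>W. {y. (\<forall>i\<in>I. y i \<in> Fob (F i) W) \<and> (\<forall>i. i \<notin> I \<longrightarrow> y i = 0)}),
     (\<lambda>W W' S y. (\<lambda>i. if i \<in> I then Fmor (F i) W W' S (y i) else 0)))"

definition nat_iso :: "('x::plus) functor_data \<Rightarrow> ('y::plus) functor_data \<Rightarrow> bool" where
  "nat_iso F G \<longleftrightarrow> (\<exists>\<phi>. \<forall>W. is_obj W \<longrightarrow>
      bij_betw (\<phi> W) (Fob F W) (Fob G W)
    \<and> (\<forall>x\<in>Fob F W. \<forall>y\<in>Fob F W. \<phi> W (x + y) = \<phi> W x + \<phi> W y)
    \<and> (\<forall>W'. is_obj W' \<longrightarrow> (\<forall>S\<in>hom W W'. \<forall>x\<in>Fob F W.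
          \<phi> W' (Fmor F W W' S x) = Fmor G W W' S (\<phi> W x))))"

end

theory Submission
  imports Defs
begin

text \<open>A morphism V \<rightarrow> W of Sp(E_q^deg) is the graph S of a linear isometric partial
  injection from V to W whose domain is a subobject of V, composition being relational
  composition. Pairing F_2[Hom(A,W)] with itself by counting common total maps A \<rightarrow> W, the
  functional a_A(x) is y \<mapsto> \<Sum>{x S y S | S total}, so iso_A(W) is spanned by the
  coordinate functionals at the total maps, and post-composition with T is adjoint to
  post-composition with the transpose of T.

  Send x \<in> Q_V(W) to the family of the a_A(x|A), where x|A is x pulled back along the
  inclusion of the subobject A. It is injective by a
  triangularity argument: if S is a maximal graph (for inclusion) in the support of x,
  then in the component A = Domain S the coordinate at S equals x S = 1, because every
  other S' in the support restricting to S on A would strictly contain S. Finally the two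
  sides have the same size: an element of the sum is determined by its coordinates at the
  pairs (A, S) with S : A \<rightarrow> W total, and these pairs correspond to the S \<in> Hom(V,W).\<close>

declare add_bit_eq_xor[simp del] mult_bit_eq_and[simp del]

lemma bit_add_self [simp]: "(a::bit) + a = 0"
  by (cases a) auto

lemma bit_fun_add_self [simp]: "(f :: 'a \<Rightarrow> bit) + f = 0"
  by (rule ext) simp

lemma bit_fun2_add_self: "(f :: 'a \<Rightarrow> 'b \<Rightarrow> bit) + f = 0"
  by (rule ext)+ simp

lemma bit_fun_eq_if_add_eq_0:
  assumes "(x :: 'a \<Rightarrow> bit) + y = 0"
  shows "x = y"
proof -
  have "x = x + (y + y)" by simp
  also have "\<dots> = (x + y) + y" by (simp only: add.assoc)
  also have "\<dots> = y" using assms by simp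
  finally show ?thesis .
qed

lemma sum_fun_apply: "(\<Sum>i\<in>I. f i) x = (\<Sum>i\<in>I. f i x)"
  by (induction I rule: infinite_finite_induct) auto

lemma sum_filter_sum_filter:
  assumes "finite H" "finite K"
  shows "(\<Sum>R\<in>{R\<in>K. P R}. \<Sum>S\<in>{S\<in>H. Q S R}. f S R)
       = (\<Sum>R\<in>K. \<Sum>S\<in>H. if P R \<and> Q S R then f S R else (0::'a::comm_monoid_add))"
proof -
  have "(\<Sum>R\<in>{R\<in>K. P R}. \<Sum>S\<in>{S\<in>H. Q S R}. f S R)
      = (\<Sum>R\<in>K. if P R then (\<Sum>S\<in>{S\<in>H. Q S R}. f S R) else 0)"
    using assms(2) by (rule sum.inter_filter)
  also have "\<dots> = (\<Sum>R\<in>K. \<Sum>S\<in>H. if P R \<and> Q S R then f S R else 0)"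
    using assms(1) by (intro sum.cong) (simp_all add: sum.inter_filter)
  finally show ?thesis .
qed

lemma bij_betw_if_inj_on_back_and_forth:
  assumes "finite A" "inj_on f A" "f ` A \<subseteq> B" "inj_on g B" "g ` B \<subseteq> A"
  shows "bij_betw f A B"
proof -
  have "finite B" using finite_imageD[OF finite_subset[OF assms(5,1)] assms(4)] .
  have "card B \<le> card A" using card_inj_on_le[OF assms(4,5,1)] .
  also have "\<dots> = card (f ` A)" using card_image[OF assms(2)] by simp
  finally have "card (f ` A) = card B" using card_mono[OF \<open>finite B\<close> assms(3)] by linarith
  then have "f ` A = B" by (rule card_subset_eq[OF \<open>finite B\<close> assms(3)])
  then show ?thesis using assms(2) by (simp add: bij_betw_def)
qed

definition restr_obj :: "qobj \<Rightarrow> vec set \<Rightarrow> qobj" where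
  "restr_obj V X = (X, \<lambda>x. if x \<in> X then qf V x else 0)"

lemma car_restr_obj [simp]: "car (restr_obj V X) = X"
  by (simp add: restr_obj_def car_def)

lemma qf_restr_obj: "qf (restr_obj V X) x = (if x \<in> X then qf V x else 0)"
  by (simp add: restr_obj_def qf_def)

lemma subobjects_eq: "subobjects V = {restr_obj V A | A. A \<subseteq> car V \<and> subspace2 A}"
  by (simp add: subobjects_def restr_obj_def)

lemma is_obj_restr_obj:
  assumes V: "is_obj V" and XV: "X \<subseteq> car V" and X: "subspace2 X"
  shows "is_obj (restr_obj V X)"
proof -
  have add_X: "\<And>x y. x \<in> X \<Longrightarrow> y \<in> X \<Longrightarrow> x + y \<in> X" and "0 \<in> X"
    using X by (auto simp: subspace2_def)
  have polar_restr: "polar (qf (restr_obj V X)) x y = polar (qf V) x y" if "x \<in> X" "y \<in> X" for x y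
    using that add_X by (simp add: polar_def qf_restr_obj)
  have "quadratic_form X (qf (restr_obj V X))"
    using V XV \<open>0 \<in> X\<close> add_X
    by (auto simp: quadratic_form_def is_obj_def qf_restr_obj polar_restr subset_iff)
  moreover have "finite X"
    using V XV finite_subset by (auto simp: is_obj_def)
  ultimately show ?thesis
    using X by (simp add: is_obj_def qf_restr_obj)
qed

lemma subobjectsD:
  assumes V: "is_obj V" and A: "A \<in> subobjects V"
  shows "is_obj A" "car A \<subseteq> car V" "subspace2 (car A)" "A = restr_obj V (car A)"
proof -
  obtain X where X: "A = restr_obj V X" "X \<subseteq> car V" "subspace2 X"
    using A unfolding subobjects_eq by blast
  then show "is_obj A" using is_obj_restr_obj[OF V] by simp
  show "car A \<subseteq> car V" "subspace2 (car A)" "A = restr_obj V (car A)" using X by auto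
qed

section \<open>Morphisms of the span category as partial isometries\<close>

definition partial_isometry :: "qobj \<Rightarrow> qobj \<Rightarrow> smor \<Rightarrow> bool" where
  "partial_isometry V W S \<longleftrightarrow> S \<subseteq> car V \<times> car W \<and> (0, 0) \<in> S
     \<and> (\<forall>a b a' b'. (a, b) \<in> S \<longrightarrow> (a', b') \<in> S \<longrightarrow> (a + a', b + b') \<in> S)
     \<and> single_valued S \<and> single_valued (converse S)
     \<and> (\<forall>a b. (a, b) \<in> S \<longrightarrow> qf W b = qf V a)"

lemma partial_isometryD:
  assumes "partial_isometry V W S"
  shows "S \<subseteq> car V \<times> car W" "(0, 0) \<in> S"
    "\<And>a b a' b'. (a, b) \<in> S \<Longrightarrow> (a', b') \<in> S \<Longrightarrow> (a + a', b + b') \<in> S"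
    "single_valued S" "single_valued (converse S)"
    "\<And>a b. (a, b) \<in> S \<Longrightarrow> qf W b = qf V a"
  using assms unfolding partial_isometry_def by blast+

lemma subspace2_Domain:
  assumes "partial_isometry V W S"
  shows "subspace2 (Domain S)"
  unfolding subspace2_def
proof (intro conjI ballI)
  show "0 \<in> Domain S" using partial_isometryD(2)[OF assms] by (rule DomainI)
next
  fix x y assume "x \<in> Domain S" "y \<in> Domain S"
  then obtain b b' where "(x, b) \<in> S" "(y, b') \<in> S" by blast
  then have "(x + y, b + b') \<in> S" by (rule partial_isometryD(3)[OF assms])
  then show "x + y \<in> Domain S" by (rule DomainI)
qed

lemma is_qmor_zero: "is_qmor D V f \<Longrightarrow> is_obj D \<Longrightarrow> f 0 = 0"
  unfolding is_qmor_def is_obj_def subspace2_def by (metis add_0 bit_fun_add_self)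

lemma partial_isometry_span_class:
  assumes "is_span V W s"
  shows "partial_isometry V W (span_class s)"
proof -
  obtain D f g where s: "s = (D, f, g)" by (cases s)
  have D: "is_obj D" and f: "is_qmor D V f" and g: "is_qmor D W g"
    using assms s by (auto simp: is_span_def)
  have "0 \<in> car D" and add_D: "\<And>x y. x \<in> car D \<Longrightarrow> y \<in> car D \<Longrightarrow> x + y \<in> car D"
    using D by (auto simp: is_obj_def subspace2_def)
  let ?S = "(\<lambda>d. (f d, g d)) ` car D"
  have "(f 0, g 0) \<in> ?S" using \<open>0 \<in> car D\<close> by blast
  then have "(0, 0) \<in> ?S" using is_qmor_zero[OF f D] is_qmor_zero[OF g D] by simp
  moreover have "(a + a', b + b') \<in> ?S" if ab: "(a, b) \<in> ?S" "(a', b') \<in> ?S" for a b a' b'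
  proof -
    obtain d d' where "d \<in> car D" "d' \<in> car D" "a = f d" "b = g d" "a' = f d'" "b' = g d'"
      using ab by blast
    then have "(a + a', b + b') = (f (d + d'), g (d + d'))" and "d + d' \<in> car D"
      using f g add_D by (auto simp: is_qmor_def)
    then show ?thesis by blast
  qed
  moreover have "single_valued ?S" "single_valued (converse ?S)"
    using f g by (auto simp: single_valued_def is_qmor_def inj_on_def)
  moreover have "?S \<subseteq> car V \<times> car W" using f g by (auto simp: is_qmor_def)
  moreover have "qf W b = qf V a" if "(a, b) \<in> ?S" for a b
    using that f g by (auto simp: is_qmor_def)
  ultimately show ?thesis
    unfolding s span_class_def partial_isometry_def by simp
qed

lemma partial_isometry_in_hom:
  assumes V: "is_obj V" and S: "partial_isometry V W S"
  shows "S \<in> hom V W"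
proof -
  define X where "X = Domain S"
  define g where "g = (\<lambda>a. THE b. (a, b) \<in> S)"
  have g_eq: "g a = b" if "(a, b) \<in> S" for a b
    unfolding g_def using that partial_isometryD(4)[OF S] by (auto simp: single_valued_def)
  have graph: "(a, g a) \<in> S" if "a \<in> X" for a
    using that g_eq unfolding X_def by blast
  have XV: "X \<subseteq> car V" using partial_isometryD(1)[OF S] by (auto simp: X_def)
  have X: "subspace2 X" unfolding X_def using S by (rule subspace2_Domain)
  have "is_qmor (restr_obj V X) V id"
    using XV X by (auto simp: is_qmor_def qf_restr_obj subspace2_def)
  moreover have "is_qmor (restr_obj V X) W g"
    unfolding is_qmor_def
  proof (intro conjI ballI)
    show "g ` car (restr_obj V X) \<subseteq> car W" using graph partial_isometryD(1)[OF S] by auto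
    show "inj_on g (car (restr_obj V X))"
    proof (rule inj_onI)
      fix x y assume "x \<in> car (restr_obj V X)" "y \<in> car (restr_obj V X)" "g x = g y"
      then have "(g x, x) \<in> converse S" "(g x, y) \<in> converse S" using graph[of x] graph[of y] by auto
      then show "x = y" using single_valuedD[OF partial_isometryD(5)[OF S]] by blast
    qed
  next
    fix x y assume "x \<in> car (restr_obj V X)" "y \<in> car (restr_obj V X)"
    then have "(x + y, g x + g y) \<in> S" using graph partial_isometryD(3)[OF S] by simp
    then show "g (x + y) = g x + g y" by (rule g_eq)
  next
    fix x assume "x \<in> car (restr_obj V X)"
    then show "qf W (g x) = qf (restr_obj V X) x"
      using graph partial_isometryD(6)[OF S] by (simp add: qf_restr_obj)
  qed
  ultimately have "is_span V W (restr_obj V X, id, g)"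
    using is_obj_restr_obj[OF V XV X] by (simp add: is_span_def)
  moreover have "span_class (restr_obj V X, id, g) = S"
    using graph g_eq by (force simp: span_class_def X_def)
  ultimately show ?thesis unfolding hom_def by force
qed

lemma hom_iff_partial_isometry:
  assumes "is_obj V"
  shows "S \<in> hom V W \<longleftrightarrow> partial_isometry V W S"
proof
  show "S \<in> hom V W \<Longrightarrow> partial_isometry V W S"
    unfolding hom_def using partial_isometry_span_class by blast
qed (rule partial_isometry_in_hom[OF assms])

lemma partial_isometry_relcomp:
  assumes S: "partial_isometry V W S" and T: "partial_isometry W U T"
  shows "partial_isometry V U (S O T)"
  unfolding partial_isometry_def
proof (intro conjI allI impI)
  show "S O T \<subseteq> car V \<times> car U" "(0, 0) \<in> S O T"
    using partial_isometryD(1,2)[OF S] partial_isometryD(1,2)[OF T] by blast+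
  show "single_valued (S O T)"
    using partial_isometryD(4)[OF S] partial_isometryD(4)[OF T] by (rule single_valued_relcomp)
  show "single_valued (converse (S O T))" unfolding converse_relcomp
    using partial_isometryD(5)[OF T] partial_isometryD(5)[OF S] by (rule single_valued_relcomp)
next
  fix a c a' c' assume "(a, c) \<in> S O T" "(a', c') \<in> S O T"
  then obtain b b' where "(a, b) \<in> S" "(b, c) \<in> T" "(a', b') \<in> S" "(b', c') \<in> T" by blast
  then show "(a + a', c + c') \<in> S O T"
    using partial_isometryD(3)[OF S] partial_isometryD(3)[OF T] by blast
next
  fix a c assume "(a, c) \<in> S O T"
  then show "qf U c = qf V a" using partial_isometryD(6)[OF S] partial_isometryD(6)[OF T] by force
qed

lemma relcomp_in_hom:
  assumes "is_obj V" "is_obj W" "S \<in> hom V W" "T \<in> hom W U"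
  shows "S O T \<in> hom V U"
  using assms hom_iff_partial_isometry partial_isometry_relcomp by metis

lemma finite_hom:
  assumes "is_obj V" "is_obj W"
  shows "finite (hom V W)"
proof -
  have "hom V W \<subseteq> Pow (car V \<times> car W)"
    using hom_iff_partial_isometry[OF assms(1)] partial_isometryD(1) by blast
  moreover have "finite (car V)" "finite (car W)" using assms by (auto simp: is_obj_def)
  ultimately show ?thesis by (meson finite_Pow_iff finite_SigmaI finite_subset)
qed

lemma Id_on_in_hom: "is_obj A \<Longrightarrow> Id_on (car A) \<in> hom A A"
  by (auto simp: hom_iff_partial_isometry partial_isometry_def is_obj_def subspace2_def
      single_valued_def)

lemma subobject_incl_in_hom:
  assumes V: "is_obj V" and A: "A \<in> subobjects V"
  shows "Id_on (car A) \<in> hom A V"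
proof -
  have "qf A x = qf V x" if "x \<in> car A" for x
    by (subst subobjectsD(4)[OF V A]) (simp add: qf_restr_obj that)
  then show ?thesis
    using subobjectsD(1-3)[OF V A]
    by (auto simp: hom_iff_partial_isometry partial_isometry_def subspace2_def single_valued_def)
qed

lemma hom_restr_Domain:
  assumes V: "is_obj V" and S: "S \<in> hom V W"
  shows "S \<in> hom (restr_obj V (Domain S)) W"
proof -
  have "partial_isometry V W S" using S V by (simp add: hom_iff_partial_isometry)
  then have "partial_isometry (restr_obj V (Domain S)) W S"
    unfolding partial_isometry_def by (auto simp: qf_restr_obj)
  moreover have "is_obj (restr_obj V (Domain S))"
    using \<open>partial_isometry V W S\<close> partial_isometryD(1) subspace2_Domain
    by (blast intro: is_obj_restr_obj[OF V])
  ultimately show ?thesis by (simp add: hom_iff_partial_isometry)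
qed

lemma hom_subobject_in_hom:
  assumes V: "is_obj V" and A: "A \<in> subobjects V" and R: "R \<in> hom A W"
  shows "R \<in> hom V W"
proof -
  obtain X where X: "A = restr_obj V X" "X \<subseteq> car V"
    using A unfolding subobjects_eq by blast
  have "partial_isometry A W R"
    using R subobjectsD(1)[OF V A] by (simp add: hom_iff_partial_isometry)
  then have "partial_isometry V W R"
    using X unfolding partial_isometry_def by (auto simp: qf_restr_obj)
  then show ?thesis using V by (simp add: hom_iff_partial_isometry)
qed

lemma relcomp_converse_eq_Id_on_iff:
  assumes R: "partial_isometry A W R" and S: "partial_isometry A W S"
  shows "R O converse S = Id_on (car A) \<longleftrightarrow> R = S \<and> Domain S = car A"
proof
  assume H: "R O converse S = Id_on (car A)"
  have common: "\<exists>w. (a, w) \<in> R \<and> (a, w) \<in> S" if "a \<in> car A" for a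
  proof -
    have "(a, a) \<in> R O converse S" unfolding H using that by (rule Id_onI)
    then show ?thesis by blast
  qed
  have "R \<subseteq> S" "S \<subseteq> R"
    using common partial_isometryD(1)[OF R] partial_isometryD(1)[OF S]
      single_valuedD[OF partial_isometryD(4)[OF R]] single_valuedD[OF partial_isometryD(4)[OF S]]
    by fast+
  moreover have "Domain S = car A"
    using common partial_isometryD(1)[OF S] by blast
  ultimately show "R = S \<and> Domain S = car A" by blast
next
  assume "R = S \<and> Domain S = car A"
  then show "R O converse S = Id_on (car A)"
    using single_valuedD[OF partial_isometryD(5)[OF S]] by blast
qed

lemma relcomp_relcomp_converse_cancel:
  assumes "single_valued S" "single_valued (converse T)" "Domain S \<subseteq> Domain (S O T)"
  shows "(S O T) O converse T = S"
proof
  show "(S O T) O converse T \<subseteq> S"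
    using single_valuedD[OF assms(2)] by blast
  show "S \<subseteq> (S O T) O converse T"
  proof
    fix p assume p: "p \<in> S"
    obtain a b where ab: "p = (a, b)" by (cases p)
    then obtain b' w where "(a, b') \<in> S" "(b', w) \<in> T" using p assms(3) by blast
    moreover have "b' = b" using single_valuedD[OF assms(1)] p ab \<open>(a, b') \<in> S\<close> by blast
    ultimately show "p \<in> (S O T) O converse T" using ab by blast
  qed
qed

text \<open>The combinatorial form of the adjointness of post-composition with T and with
  its transpose, for the pairing on total maps.\<close>

lemma total_relcomp_eq_iff:
  assumes S: "partial_isometry A W S" and R: "partial_isometry A W' R"
    and T: "partial_isometry W W' T"
  shows "Domain R = car A \<and> S O T = R \<longleftrightarrow> Domain S = car A \<and> R O converse T = S"
proof
  assume H: "Domain R = car A \<and> S O T = R"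
  then have "Domain S = car A" using partial_isometryD(1)[OF S] by blast
  then show "Domain S = car A \<and> R O converse T = S"
    using H relcomp_relcomp_converse_cancel[OF partial_isometryD(4)[OF S] partial_isometryD(5)[OF T]]
    by simp
next
  assume H: "Domain S = car A \<and> R O converse T = S"
  then have "Domain R = car A" using partial_isometryD(1)[OF R] by blast
  then show "Domain R = car A \<and> S O T = R"
    using H relcomp_relcomp_converse_cancel[OF partial_isometryD(4)[OF R], of "converse T"]
      partial_isometryD(4)[OF T] by simp
qed

definition pushfwd :: "'a set \<Rightarrow> 'b set \<Rightarrow> ('a \<Rightarrow> 'b) \<Rightarrow> ('a \<Rightarrow> bit) \<Rightarrow> 'b \<Rightarrow> bit" where
  "pushfwd H H' g x = (\<lambda>b. if b \<in> H' then (\<Sum>a\<in>{a\<in>H. g a = b}. x a) else 0)"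

lemma Qmor_eq_pushfwd: "Qmor V W W' T = pushfwd (hom V W) (hom V W') (\<lambda>S. S O T)"
  by (simp add: Qmor_def pushfwd_def fun_eq_iff)

lemma pushfwd_pushfwd:
  assumes "finite H" "finite H'" "g ` H \<subseteq> H'"
  shows "pushfwd H' H'' g' (pushfwd H H' g x) = pushfwd H H'' (g' \<circ> g) x"
proof (rule ext)
  fix c
  let ?C = "{a\<in>H. g' (g a) = c}"
  have "(\<Sum>b\<in>{b\<in>H'. g' b = c}. \<Sum>a\<in>{a\<in>H. g a = b}. x a)
      = (\<Sum>b\<in>{b\<in>H'. g' b = c}. \<Sum>a\<in>{a. a \<in> ?C \<and> g a = b}. x a)"
    by (rule sum.cong) (auto intro: sum.cong)
  also have "\<dots> = (\<Sum>a\<in>?C. x a)"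
    by (rule sum.group) (use assms in auto)
  finally show "pushfwd H' H'' g' (pushfwd H H' g x) c = pushfwd H H'' (g' \<circ> g) x c"
    by (simp add: pushfwd_def)
qed

lemma pushfwd_add: "pushfwd H H' g (x + y) = pushfwd H H' g x + pushfwd H H' g y"
  by (rule ext) (simp add: pushfwd_def sum.distrib)

section \<open>The functionals a_A\<close>

definition total_homs :: "qobj \<Rightarrow> qobj \<Rightarrow> smor set" where
  "total_homs A W = {S \<in> hom A W. Domain S = car A}"

lemma finite_total_homs: "is_obj A \<Longrightarrow> is_obj W \<Longrightarrow> finite (total_homs A W)"
  using finite_hom unfolding total_homs_def by auto

lemma Qmor_in_Qob: "Qmor V W W' T x \<in> Qob V W'"
  by (simp add: Qmor_def Qob_def)

lemma delta_id_Qmor_converse: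
  assumes A: "is_obj A" and S: "S \<in> hom A W"
  shows "delta_id A (Qmor A W A (converse S) y) = (if Domain S = car A then y S else 0)"
proof -
  have "R O converse S = Id_on (car A) \<longleftrightarrow> R = S \<and> Domain S = car A" if "R \<in> hom A W" for R
    using relcomp_converse_eq_Id_on_iff that S by (simp add: hom_iff_partial_isometry[OF A])
  then have "{R \<in> hom A W. R O converse S = Id_on (car A)} = {R \<in> hom A W. R = S \<and> Domain S = car A}"
    by blast
  also have "\<dots> = (if Domain S = car A then {S} else {})"
    using S by auto
  finally show ?thesis
    using Qmor_in_Qob[of A W A "converse S" y] Id_on_in_hom[OF A]
    by (simp add: delta_id_def Qmor_def)
qed

lemma a_map_apply:
  assumes A: "is_obj A" and W: "is_obj W"
  shows "a_map A W x y = (if y \<in> Qob A W then (\<Sum>S\<in>total_homs A W. x S * y S) else 0)"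
proof -
  have "a_map A W x y
      = (\<Sum>S\<in>hom A W. (if x S = 1 then Fmor (dual_fun (Qfun A)) A W S (delta_id A) else 0) y)"
    unfolding a_map_def yoneda_def by (rule sum_fun_apply)
  also have "\<dots> = (\<Sum>S\<in>hom A W. if y \<in> Qob A W then (if Domain S = car A then x S * y S else 0) else 0)"
  proof (rule sum.cong)
    fix S assume "S \<in> hom A W"
    then show "(if x S = 1 then Fmor (dual_fun (Qfun A)) A W S (delta_id A) else 0) y
        = (if y \<in> Qob A W then (if Domain S = car A then x S * y S else 0) else 0)"
      using delta_id_Qmor_converse[OF A]
      by (cases "x S") (simp_all add: Fmor_def dual_fun_def Fob_def Qfun_def)
  qed simp
  also have "\<dots> = (if y \<in> Qob A W then (\<Sum>S\<in>total_homs A W. x S * y S) else 0)"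
    using finite_hom[OF A W] unfolding total_homs_def by (simp add: sum.inter_filter)
  finally show ?thesis .
qed

lemma a_map_add:
  assumes "is_obj A" "is_obj W"
  shows "a_map A W (x + y) = a_map A W x + a_map A W y"
  by (rule ext) (simp add: a_map_apply[OF assms] distrib_right sum.distrib)

lemma Qmor_adjoint:
  assumes A: "is_obj A" and W: "is_obj W" and W': "is_obj W'" and T: "T \<in> hom W W'"
  shows "(\<Sum>R\<in>total_homs A W'. Qmor A W W' T x R * y R)
       = (\<Sum>S\<in>total_homs A W. x S * Qmor A W' W (converse T) y S)"
proof -
  have fin: "finite (hom A W)" "finite (hom A W')" using finite_hom A W W' by auto
  have "(\<Sum>R\<in>total_homs A W'. Qmor A W W' T x R * y R)
      = (\<Sum>R\<in>{R\<in>hom A W'. Domain R = car A}. \<Sum>S\<in>{S\<in>hom A W. S O T = R}. x S * y R)"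
    unfolding total_homs_def by (rule sum.cong) (auto simp: Qmor_def sum_distrib_right)
  also have "\<dots> = (\<Sum>R\<in>hom A W'. \<Sum>S\<in>hom A W.
      if Domain R = car A \<and> S O T = R then x S * y R else 0)"
    using fin by (rule sum_filter_sum_filter)
  also have "\<dots> = (\<Sum>S\<in>hom A W. \<Sum>R\<in>hom A W'.
      if Domain S = car A \<and> R O converse T = S then x S * y R else 0)"
    by (subst sum.swap) (intro sum.cong refl if_cong total_relcomp_eq_iff;
        use T in \<open>simp add: hom_iff_partial_isometry A W\<close>)
  also have "\<dots> = (\<Sum>S\<in>{S\<in>hom A W. Domain S = car A}.
      \<Sum>R\<in>{R\<in>hom A W'. R O converse T = S}. x S * y R)"
    using fin(2,1) by (rule sum_filter_sum_filter[symmetric])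
  also have "\<dots> = (\<Sum>S\<in>total_homs A W. x S * Qmor A W' W (converse T) y S)"
    unfolding total_homs_def by (rule sum.cong) (auto simp: Qmor_def sum_distrib_left)
  finally show ?thesis .
qed

lemma a_map_natural:
  assumes A: "is_obj A" and W: "is_obj W" and W': "is_obj W'" and T: "T \<in> hom W W'"
  shows "a_map A W' (Qmor A W W' T x) = Fmor (dual_fun (Qfun A)) W W' T (a_map A W x)"
proof (rule ext)
  fix y
  have "Fmor (dual_fun (Qfun A)) W W' T (a_map A W x) y
      = (if y \<in> Qob A W' then a_map A W x (Qmor A W' W (converse T) y) else 0)"
    by (simp add: Fmor_def dual_fun_def Fob_def Qfun_def)
  also have "\<dots> = (if y \<in> Qob A W'
      then (\<Sum>S\<in>total_homs A W. x S * Qmor A W' W (converse T) y S) else 0)"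
    using Qmor_in_Qob by (simp add: a_map_apply[OF A W])
  also have "\<dots> = (if y \<in> Qob A W' then (\<Sum>R\<in>total_homs A W'. Qmor A W W' T x R * y R) else 0)"
    using Qmor_adjoint[OF A W W' T] by simp
  also have "\<dots> = a_map A W' (Qmor A W W' T x) y"
    by (simp add: a_map_apply[OF A W'])
  finally show "a_map A W' (Qmor A W W' T x) y
      = Fmor (dual_fun (Qfun A)) W W' T (a_map A W x) y" ..
qed

definition unit_vec :: "smor \<Rightarrow> smor \<Rightarrow> bit" where
  "unit_vec S = (\<lambda>R. if R = S then 1 else 0)"

lemma a_map_unit_vec:
  assumes A: "is_obj A" and W: "is_obj W" and R: "R \<in> total_homs A W"
  shows "a_map A W x (unit_vec R) = x R"
proof -
  have "unit_vec R \<in> Qob A W" using R by (auto simp: Qob_def unit_vec_def total_homs_def)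
  then have "a_map A W x (unit_vec R) = (\<Sum>S\<in>total_homs A W. if S = R then x S else 0)"
    by (simp add: a_map_apply[OF A W] unit_vec_def if_distrib cong: if_cong)
  also have "\<dots> = x R" using finite_total_homs[OF A W] R by simp
  finally show ?thesis .
qed

lemma a_map_eqI:
  assumes "is_obj A" "is_obj W" "\<And>R. R \<in> total_homs A W \<Longrightarrow> x R = x' R"
  shows "a_map A W x = a_map A W x'"
  by (rule ext) (simp add: a_map_apply assms)

section \<open>The decomposition map\<close>

lemma Fob_Qfun: "Fob (Qfun V) = Qob V"
  by (simp add: Qfun_def Fob_def)

lemma Fmor_Qfun: "Fmor (Qfun V) = Qmor V"
  by (simp add: Qfun_def Fmor_def)

lemma Fob_iso_fun: "Fob (iso_fun A) W = a_map A W ` Qob A W"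
  by (simp add: iso_fun_def Fob_def)

lemma Fmor_iso_fun: "Fmor (iso_fun A) = Fmor (dual_fun (Qfun A))"
  by (simp add: iso_fun_def Fmor_def)

lemma Fob_dsum: "Fob (dsum I F) W = {y. (\<forall>i\<in>I. y i \<in> Fob (F i) W) \<and> (\<forall>i. i \<notin> I \<longrightarrow> y i = 0)}"
  by (simp add: dsum_def Fob_def)

lemma Fmor_dsum: "Fmor (dsum I F) W W' S y = (\<lambda>i. if i \<in> I then Fmor (F i) W W' S (y i) else 0)"
  by (simp add: dsum_def Fmor_def)

lemma finite_Qob:
  assumes "is_obj V" "is_obj W"
  shows "finite (Qob V W)"
proof -
  have "Qob V W = {f. \<forall>x. (x \<in> hom V W \<longrightarrow> f x \<in> {0, 1}) \<and> (x \<notin> hom V W \<longrightarrow> f x = 0)}"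
    unfolding Qob_def by (auto intro: bit.exhaust)
  then show ?thesis
    using finite_set_of_finite_funs[OF finite_hom[OF assms], of "{0, 1}" 0] by simp
qed

definition restr_coeffs :: "qobj \<Rightarrow> qobj \<Rightarrow> qobj \<Rightarrow> (smor \<Rightarrow> bit) \<Rightarrow> smor \<Rightarrow> bit" where
  "restr_coeffs V A W = pushfwd (hom V W) (hom A W) (\<lambda>S. Id_on (car A) O S)"

lemma restr_coeffs_natural:
  assumes V: "is_obj V" and A: "A \<in> subobjects V" and W: "is_obj W" and W': "is_obj W'"
    and T: "T \<in> hom W W'"
  shows "restr_coeffs V A W' (Qmor V W W' T x) = Qmor A W W' T (restr_coeffs V A W x)"
proof -
  have A_obj: "is_obj A" and incl: "Id_on (car A) \<in> hom A V"
    using subobjectsD(1)[OF V A] subobject_incl_in_hom[OF V A] by auto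
  have "restr_coeffs V A W' (Qmor V W W' T x)
      = pushfwd (hom V W) (hom A W') ((\<lambda>S. Id_on (car A) O S) \<circ> (\<lambda>S. S O T)) x"
    unfolding restr_coeffs_def Qmor_eq_pushfwd
    by (rule pushfwd_pushfwd)
      (use finite_hom[OF V W] finite_hom[OF V W'] relcomp_in_hom[OF V W _ T] in auto)
  also have "\<dots> = pushfwd (hom V W) (hom A W') ((\<lambda>S. S O T) \<circ> (\<lambda>S. Id_on (car A) O S)) x"
    by (simp add: comp_def O_assoc)
  also have "\<dots> = Qmor A W W' T (restr_coeffs V A W x)"
    unfolding restr_coeffs_def Qmor_eq_pushfwd
    by (rule pushfwd_pushfwd[symmetric])
      (use finite_hom[OF V W] finite_hom[OF A_obj W] relcomp_in_hom[OF A_obj V incl, where U = W]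
        in auto)
  finally show ?thesis .
qed

definition decomp :: "qobj \<Rightarrow> qobj \<Rightarrow> (smor \<Rightarrow> bit) \<Rightarrow> qobj \<Rightarrow> (smor \<Rightarrow> bit) \<Rightarrow> bit" where
  "decomp V W x = (\<lambda>A. if A \<in> subobjects V then a_map A W (restr_coeffs V A W x) else 0)"

lemma decomp_in:
  "decomp V W x \<in> Fob (dsum (subobjects V) iso_fun) W"
  by (auto simp: decomp_def Fob_dsum Fob_iso_fun restr_coeffs_def pushfwd_def Qob_def)

lemma decomp_add:
  assumes V: "is_obj V" and W: "is_obj W"
  shows "decomp V W (x + y) = decomp V W x + decomp V W y"
  using subobjectsD(1)[OF V]
  by (auto simp: fun_eq_iff decomp_def restr_coeffs_def pushfwd_add a_map_add[OF _ W])

lemma decomp_natural: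
  assumes V: "is_obj V" and W: "is_obj W" and W': "is_obj W'" and T: "T \<in> hom W W'"
  shows "decomp V W' (Qmor V W W' T x) = Fmor (dsum (subobjects V) iso_fun) W W' T (decomp V W x)"
  using subobjectsD(1)[OF V]
  by (auto simp: fun_eq_iff decomp_def Fmor_dsum Fmor_iso_fun restr_coeffs_natural[OF V _ W W' T]
      a_map_natural[OF _ W W' T])

lemma decomp_eq_0D:
  assumes V: "is_obj V" and W: "is_obj W" and z: "z \<in> Qob V W" and "decomp V W z = 0"
  shows "z = 0"
proof (rule ccontr)
  let ?supp = "{S \<in> hom V W. z S = 1}"
  assume "z \<noteq> 0"
  then have "?supp \<noteq> {}" using z by (auto simp: fun_eq_iff Qob_def)
  moreover have "finite ?supp" using finite_hom[OF V W] by simp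
  ultimately obtain S where S: "S \<in> ?supp" and S_max: "\<forall>S'\<in>?supp. S \<subseteq> S' \<longrightarrow> S = S'"
    by (meson finite_has_maximal)
  define A where "A = restr_obj V (Domain S)"
  have S_V: "partial_isometry V W S" using S hom_iff_partial_isometry[OF V] by simp
  have A_sub: "A \<in> subobjects V"
    using partial_isometryD(1)[OF S_V] subspace2_Domain[OF S_V] unfolding A_def subobjects_eq by blast
  have A_obj: "is_obj A" using subobjectsD(1)[OF V A_sub] .
  have S_A: "S \<in> hom A W" unfolding A_def using hom_restr_Domain[OF V] S by simp
  have S_tot: "S \<in> total_homs A W" using S_A by (simp add: total_homs_def A_def)
  let ?C = "{S' \<in> hom V W. Id_on (Domain S) O S' = S}"
  have "Id_on (Domain S) O S = S" by (auto simp: Id_on_iff)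
  then have "S \<in> ?C" using S by simp
  have z_on_C: "z S' = (if S' = S then 1 else 0)" if "S' \<in> ?C" for S'
  proof (cases "S' = S")
    case False
    have "Id_on (Domain S) O S' \<subseteq> S'" by blast
    then have "S \<subseteq> S'" using that by simp
    then show ?thesis using S_max that False by (cases "z S'") auto
  qed (use S in simp)
  have "restr_coeffs V A W z S = (\<Sum>S'\<in>?C. z S')"
    using S_A by (simp add: restr_coeffs_def pushfwd_def A_def)
  also have "\<dots> = (\<Sum>S'\<in>?C. if S' = S then 1 else 0)"
    using z_on_C by (rule sum.cong[OF refl])
  also have "\<dots> = 1"
    using finite_hom[OF V W] \<open>S \<in> ?C\<close> by simp
  finally have "restr_coeffs V A W z S = 1" .
  moreover have "a_map A W (restr_coeffs V A W z) = 0"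
    using fun_cong[OF \<open>decomp V W z = 0\<close>, of A] A_sub by (simp add: decomp_def)
  then have "restr_coeffs V A W z S = 0"
    using a_map_unit_vec[OF A_obj W S_tot, of "restr_coeffs V A W z"] by simp
  ultimately show False by simp
qed

lemma inj_on_decomp:
  assumes V: "is_obj V" and W: "is_obj W"
  shows "inj_on (decomp V W) (Qob V W)"
proof (rule inj_onI)
  fix x y assume x: "x \<in> Qob V W" and y: "y \<in> Qob V W" and "decomp V W x = decomp V W y"
  then have "decomp V W (x + y) = 0" by (simp add: decomp_add[OF V W] bit_fun2_add_self)
  moreover have "x + y \<in> Qob V W" using x y by (simp add: Qob_def)
  ultimately show "x = y" using decomp_eq_0D[OF V W] bit_fun_eq_if_add_eq_0 by blast
qed

definition coords :: "qobj \<Rightarrow> qobj \<Rightarrow> (qobj \<Rightarrow> (smor \<Rightarrow> bit) \<Rightarrow> bit) \<Rightarrow> smor \<Rightarrow> bit" where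
  "coords V W y = (\<lambda>S. if S \<in> hom V W then y (restr_obj V (Domain S)) (unit_vec S) else 0)"

lemma coords_in: "coords V W y \<in> Qob V W"
  by (simp add: coords_def Qob_def)

lemma inj_on_coords:
  assumes V: "is_obj V" and W: "is_obj W"
  shows "inj_on (coords V W) (Fob (dsum (subobjects V) iso_fun) W)"
proof (rule inj_onI)
  fix y y' assume y: "y \<in> Fob (dsum (subobjects V) iso_fun) W"
    and y': "y' \<in> Fob (dsum (subobjects V) iso_fun) W" and eq: "coords V W y = coords V W y'"
  show "y = y'"
  proof
    fix A show "y A = y' A"
    proof (cases "A \<in> subobjects V")
      case False
      then have "y A = 0" "y' A = 0" using y y' unfolding Fob_dsum by blast+
      then show ?thesis by simp
    next
      case A: True
      have A_obj: "is_obj A" and A_eq: "A = restr_obj V (car A)" using subobjectsD[OF V A] by auto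
      obtain x x' where x: "y A = a_map A W x" and x': "y' A = a_map A W x'"
        using y y' A unfolding Fob_dsum Fob_iso_fun by blast
      have "a_map A W x = a_map A W x'"
      proof (rule a_map_eqI[OF A_obj W])
        fix R assume R: "R \<in> total_homs A W"
        then have "R \<in> hom V W" "restr_obj V (Domain R) = A"
          using hom_subobject_in_hom[OF V A] A_eq by (auto simp: total_homs_def)
        then have "y A (unit_vec R) = y' A (unit_vec R)"
          using fun_cong[OF eq, of R] by (simp add: coords_def)
        then show "x R = x' R" using x x' a_map_unit_vec[OF A_obj W R] by simp
      qed
      then show ?thesis using x x' by simp
    qed
  qed
qed

lemma bij_betw_decomp:
  assumes V: "is_obj V" and W: "is_obj W"
  shows "bij_betw (decomp V W) (Qob V W) (Fob (dsum (subobjects V) iso_fun) W)"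
proof (rule bij_betw_if_inj_on_back_and_forth)
  show "decomp V W ` Qob V W \<subseteq> Fob (dsum (subobjects V) iso_fun) W" using decomp_in by blast
  show "coords V W ` Fob (dsum (subobjects V) iso_fun) W \<subseteq> Qob V W" using coords_in by blast
qed (rule finite_Qob[OF V W] inj_on_decomp[OF V W] inj_on_coords[OF V W])+

theorem theorem4p31:
  assumes "is_obj V"
  shows "nat_iso (Qfun V) (dsum (subobjects V) iso_fun)"
  unfolding nat_iso_def Fob_Qfun Fmor_Qfun
  using bij_betw_decomp[OF assms] decomp_add[OF assms] decomp_natural[OF assms] by blast

end
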